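(* Let $n\ge1$ and $k_1,\dots,k_n\in\mathbb N$, and write $W_a=\chi_{k_1}\circ\cdots\circ\chi_{k_n}(a)$ for $a\in\{1,2,3\}$. Then: (i) $W_3$ is a prefix of $W_2$; (ii) if $k_n\ge2$, then the word obtained from $W_1$ by deleting its last letter is a prefix of $W_3$, and the last letter of $W_1$ is $1$ if $n$ is even and $2$ if $n$ is odd; (iii) if $k_n=1$ and $n\ge2$, then $W_3$ is a prefix of $W_1$.
   Context: For $k\in\mathbb N$, $\chi_k$ is the substitution on the alphabet $\{1,2,3\}$ given by $1\mapsto2$, $2\mapsto31^k$, $3\mapsto31^{k-1}$, extended to words by concatenation. *)

theory Defs
  imports Main "HOL-Library.Sublist"
begin

fun chi_letter :: "nat \<Rightarrow> nat \<Rightarrow> nat list" where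
  "chi_letter k a =
     (if a = 1 then [2]
      else if a = 2 then 3 # replicate k 1
      else if a = 3 then 3 # replicate (k - 1) 1
      else [a])"

definition chi :: "nat \<Rightarrow> nat list \<Rightarrow> nat list" where
  "chi k w = concat (map (chi_letter k) w)"

text \<open>W ks a = chi_{k1} (chi_{k2} ( ... (chi_{kn} [a]))) for ks = [k1,...,kn].\<close>
definition W :: "nat list \<Rightarrow> nat \<Rightarrow> nat list" where
  "W ks a = foldr chi ks [a]"

end

(* Writing W' for the words of k_1, ..., k_(n-1), so that W_a is W' applied letterwise
   to chi_(k_n)(a), one gets W_1 = W'_2, W_2 = W'_3 (W'_1)^(k_n) and
   W_3 = W'_3 (W'_1)^(k_n - 1); for k_n >= 1 hence W_2 = W_3 W'_1, which is (i).
   A simultaneous induction along the same recursion shows that butlast W_1 is a prefix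
   of W_2 and butlast W_2 a prefix of W_3 W_1, and that the last letters of W_1 and W_2
   swap between 1 and 2 at each step. *)

theory Submission
  imports Defs
begin

(* Letters are numerals; the letter 1 must not be rewritten to Suc 0. *)
declare One_nat_def [simp del]

lemma chi_append [simp]: "chi k (u @ v) = chi k u @ chi k v"
  by (simp add: chi_def)

lemma chi_eq_Nil_iff [simp]: "chi k w = [] \<longleftrightarrow> w = []"
  by (cases w) (simp_all add: chi_def)

lemma foldr_chi_Nil [simp]: "foldr chi ks [] = []"
  by (induction ks) (simp_all add: chi_def)

lemma foldr_chi_append [simp]: "foldr chi ks (u @ v) = foldr chi ks u @ foldr chi ks v"
  by (induction ks) auto

lemma foldr_chi_Cons: "foldr chi ks (a # w) = W ks a @ foldr chi ks w"
  using foldr_chi_append[of ks "[a]" w] by (simp add: W_def)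

lemma foldr_chi_replicate: "foldr chi ks (replicate n a) = concat (replicate n (W ks a))"
  by (induction n) (simp_all add: foldr_chi_Cons)

lemma W_Nil [simp]: "W [] a = [a]"
  by (simp add: W_def)

lemma W_snoc: "W (ks @ [k]) a = foldr chi ks (chi_letter k a)"
  by (simp add: W_def chi_def)

lemma W_snoc_1: "W (ks @ [k]) 1 = W ks 2"
  unfolding W_snoc by (simp add: W_def)

lemma W_snoc_2: "W (ks @ [k]) 2 = W ks 3 @ concat (replicate k (W ks 1))"
  by (simp add: W_snoc foldr_chi_Cons foldr_chi_replicate)

lemma W_snoc_3: "W (ks @ [k]) 3 = W (ks @ [k - 1]) 2"
  by (simp add: W_snoc)

lemma W_snoc_2_eq_W_snoc_3_append:
  assumes "0 < k"
  shows "W (ks @ [k]) 2 = W (ks @ [k]) 3 @ W ks 1"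
  using assms
  by (cases k) (simp_all add: W_snoc_3 W_snoc_2 replicate_append_same[symmetric] del: replicate_append_same)

lemma prefix_W_snoc_2:
  assumes "0 < k"
  shows "prefix (W ks 3 @ W ks 1) (W (ks @ [k]) 2)"
  using assms by (cases k) (simp_all add: W_snoc_2)

lemma W_nonempty: "W ks a \<noteq> []"
  by (induction ks) (simp_all add: W_def)

lemma prefix_W_3_W_2:
  assumes "ks \<noteq> []" and "\<forall>k \<in> set ks. k \<ge> 1"
  shows "prefix (W ks 3) (W ks 2)"
proof -
  obtain P k where "ks = P @ [k]"
    using assms(1) by (cases ks rule: rev_cases) auto
  with assms(2) show ?thesis
    by (simp add: W_snoc_2_eq_W_snoc_3_append)
qed

lemma prefix_butlast_W:
  assumes "\<forall>k \<in> set ks. k \<ge> 1"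
  shows "prefix (butlast (W ks 1)) (W ks 2) \<and> prefix (butlast (W ks 2)) (W ks 3 @ W ks 1)"
  using assms
proof (induction ks rule: rev_induct)
  case Nil
  show ?case by simp
next
  case (snoc k P)
  then have "0 < k" and IH: "prefix (butlast (W P 1)) (W P 2)"
    "prefix (butlast (W P 2)) (W P 3 @ W P 1)"
    by simp_all
  have "prefix (butlast (W (P @ [k]) 1)) (W (P @ [k]) 2)"
    using IH(2) prefix_W_snoc_2[OF \<open>0 < k\<close>] by (auto simp: W_snoc_1 intro: prefix_order.trans)
  moreover have "butlast (W (P @ [k]) 2) = W (P @ [k]) 3 @ butlast (W P 1)"
    by (simp add: W_snoc_2_eq_W_snoc_3_append[OF \<open>0 < k\<close>] butlast_append W_nonempty)
  ultimately show ?case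
    using IH(1) by (simp add: W_snoc_1)
qed

lemma last_W:
  assumes "\<forall>k \<in> set ks. k \<ge> 1"
  shows "last (W ks 1) = (if even (length ks) then 1 else 2)
    \<and> last (W ks 2) = (if even (length ks) then 2 else 1)"
  using assms
proof (induction ks rule: rev_induct)
  case Nil
  show ?case by simp
next
  case (snoc k P)
  then show ?case
    by (simp add: W_snoc_1 W_snoc_2_eq_W_snoc_3_append W_nonempty)
qed

theorem lemma3p13:
  fixes ks :: "nat list"
  assumes "length ks \<ge> 1"
    and "\<forall>k \<in> set ks. k \<ge> 1"
  shows "prefix (W ks 3) (W ks 2)
     \<and> (last ks \<ge> 2 \<longrightarrow>
          prefix (butlast (W ks 1)) (W ks 3)
          \<and> last (W ks 1) = (if even (length ks) then 1 else 2))
     \<and> (last ks = 1 \<and> length ks \<ge> 2 \<longrightarrow> prefix (W ks 3) (W ks 1))"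
proof (intro conjI impI)
  have "ks \<noteq> []" using assms(1) by auto
  then show "prefix (W ks 3) (W ks 2)"
    using assms(2) by (rule prefix_W_3_W_2)
  obtain P m where ks: "ks = P @ [m]"
    using \<open>ks \<noteq> []\<close> by (cases ks rule: rev_cases) auto
  have P: "\<forall>k \<in> set P. k \<ge> 1"
    using assms(2) ks by simp
  show "last (W ks 1) = (if even (length ks) then 1 else 2)"
    using last_W[OF assms(2)] by simp
  {
    assume "last ks \<ge> 2"
    then have "prefix (W P 3 @ W P 1) (W ks 3)"
      using prefix_W_snoc_2[of "m - 1" P] by (simp add: ks W_snoc_3)
    then show "prefix (butlast (W ks 1)) (W ks 3)"
      using prefix_butlast_W[OF P] by (auto simp: ks W_snoc_1 intro: prefix_order.trans)
  next
    assume "last ks = 1 \<and> length ks \<ge> 2"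
    then have "m = 1" and "P \<noteq> []"
      using ks by auto
    then show "prefix (W ks 3) (W ks 1)"
      using prefix_W_3_W_2[OF _ P] by (simp add: ks W_snoc_3 W_snoc_1 W_snoc_2)
  }
qed

end
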